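(* Let $M,N,K$ be positive integers, let $Y_0\in\mathbb{R}^{K\times N}$, and let $f_1,\dots,f_N\ge 0$ be real numbers. Let $A\in\{0,1\}^{M\times N}$ be a matrix each of whose columns contains exactly one entry equal to $1$ (all other entries $0$). For $i=1,\dots,M$ let $C_i=\{j\in\{1,\dots,N\}: A_{ij}=1\}$, and assume that $S_i:=\sum_{k\in C_i} f_k>0$ for every $i$ (in particular every $C_i$ is nonempty). Let $\mathcal{B}$ be the set of matrices $B\in\mathbb{R}^{N\times M}$ whose columns $v_1,\dots,v_M$ satisfy $v_i[j]=0$ for all $j\notin C_i$. Define, for $B\in\mathcal{B}$, $$\Phi(B)=\sum_{j=1}^{N} f_j\,\bigl\|Y_0\,(BA-I_N)\,e_j\bigr\|_2^2 ,$$ where $e_j$ is the $j$-th standard basis vector of $\mathbb{R}^N$. Then the matrix $B^*\in\mathcal{B}$ with columns $$v_i^*[j]=\begin{cases}\dfrac{f_j}{\sum_{k\in C_i} f_k}, & j\in C_i,\\[2mm] 0, & j\notin C_i,\end{cases}\qquad i=1,\dots,M,$$ is a global minimizer of $\Phi$ over $\mathcal{B}$, i.e. $\Phi(B^* )\le \Phi(B)$ for all $B\in\mathcal{B}$.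
   Context: In the paper's notation the objective is written $Y_0((BA-I_N)\mathrm{QF})\times[f_1,\dots,f_N]^\top$, where $Y_0(X)\,\mathrm{QF}$ denotes the vector whose $j$-th entry is $\|Y_0 x_j\|_2^2$ for $x_j$ the $j$-th column of $X$; this is exactly $\Phi(B)$ above. Interpretation (not needed for the claim): $N$ experts are merged into $M$ clusters, $A$ assigns each expert to a cluster, $f_j$ is the usage frequency of expert $j$, and $B$ holds the merging weights. *)

theory Defs
  imports "HOL-Analysis.Analysis"
begin

definition cluster :: "real^'n^'m \<Rightarrow> 'm \<Rightarrow> 'n set" where
  "cluster A i = {j. A $ i $ j = 1}"

definition admissible :: "real^'n^'m \<Rightarrow> real^'m^'n \<Rightarrow> bool" where
  "admissible A B \<longleftrightarrow> (\<forall>i j. j \<notin> cluster A i \<longrightarrow> B $ j $ i = 0)"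

definition Phi :: "real^'n^'k \<Rightarrow> (('n \<Rightarrow> real)) \<Rightarrow> real^'n^'m \<Rightarrow> real^'m^'n \<Rightarrow> real" where
  "Phi Y0 f A B = (\<Sum>j\<in>UNIV. f j * (norm (Y0 *v ((B ** A - mat 1) *v axis j 1)))\<^sup>2)"

definition Bstar :: "('n \<Rightarrow> real) \<Rightarrow> real^'n^'m \<Rightarrow> real^'m^'n" where
  "Bstar f A = (\<chi> j i. if j \<in> cluster A i then f j / (\<Sum>k\<in>cluster A i. f k) else 0)"

end

theory Submission
  imports Defs
begin

text \<open>Since every column of \<open>A\<close> is one-hot, \<open>(B A - I) e\<^sub>j\<close> is column \<open>i\<close> of \<open>B\<close> minus \<open>e\<^sub>j\<close>
  for the cluster \<open>i\<close> containing \<open>j\<close>, so \<open>\<Phi>(B)\<close> splits into independent sums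
  \<open>\<Sum>\<^sub>j\<^sub>\<in>\<^sub>C\<^sub>i f\<^sub>j \<parallel>x\<^sub>i - y\<^sub>j\<parallel>\<^sup>2\<close>, one per cluster, with \<open>x\<^sub>i = Y\<^sub>0 v\<^sub>i\<close> and \<open>y\<^sub>j = Y\<^sub>0 e\<^sub>j\<close>.
  By the bias-variance identity each such sum equals \<open>S\<^sub>i \<parallel>x\<^sub>i - m\<^sub>i\<parallel>\<^sup>2\<close> plus a constant,
  where \<open>m\<^sub>i\<close> is the \<open>f\<close>-weighted mean of the \<open>y\<^sub>j\<close>; as \<open>S\<^sub>i > 0\<close> it is minimal at
  \<open>x\<^sub>i = m\<^sub>i\<close>, and \<open>Y\<^sub>0 v\<^sub>i\<^sup>* = m\<^sub>i\<close>.\<close>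

lemma weighted_sum_norm_diff_squared:
  fixes y :: "'a \<Rightarrow> 'b::real_inner" and f :: "'a \<Rightarrow> real"
  assumes "sum f C \<noteq> 0"
    and "m = (1 / sum f C) *\<^sub>R (\<Sum>j\<in>C. f j *\<^sub>R y j)"
  shows "(\<Sum>j\<in>C. f j * (norm (x - y j))\<^sup>2)
       = sum f C * (norm (x - m))\<^sup>2 + (\<Sum>j\<in>C. f j * (norm (m - y j))\<^sup>2)"
proof -
  have "(\<Sum>j\<in>C. f j *\<^sub>R (m - y j)) = sum f C *\<^sub>R m - (\<Sum>j\<in>C. f j *\<^sub>R y j)"
    by (simp add: scaleR_diff_right sum_subtractf scaleR_left.sum)
  also have "\<dots> = 0"
    using assms by simp
  finally have "inner (x - m) (\<Sum>j\<in>C. f j *\<^sub>R (m - y j)) = 0"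
    by simp
  then have cross: "(\<Sum>j\<in>C. f j * inner (x - m) (m - y j)) = 0"
    by (simp add: inner_sum_right)
  have split: "(norm (x - y j))\<^sup>2
      = (norm (x - m))\<^sup>2 + 2 * inner (x - m) (m - y j) + (norm (m - y j))\<^sup>2" for j
    using dot_norm[of "x - m" "m - y j"] by simp
  have "(\<Sum>j\<in>C. f j * (norm (x - y j))\<^sup>2)
      = (\<Sum>j\<in>C. f j * (norm (x - m))\<^sup>2 + 2 * (f j * inner (x - m) (m - y j))
                  + f j * (norm (m - y j))\<^sup>2)"
    by (simp add: split algebra_simps)
  also have "\<dots> = sum f C * (norm (x - m))\<^sup>2 + 2 * (\<Sum>j\<in>C. f j * inner (x - m) (m - y j))
                  + (\<Sum>j\<in>C. f j * (norm (m - y j))\<^sup>2)"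
    by (simp add: sum.distrib sum_distrib_left sum_distrib_right)
  finally show ?thesis
    using cross by simp
qed

lemma weighted_mean_minimizes_weighted_sum_norm_diff_squared:
  fixes y :: "'a \<Rightarrow> 'b::real_inner" and f :: "'a \<Rightarrow> real"
  assumes "sum f C > 0"
    and "m = (1 / sum f C) *\<^sub>R (\<Sum>j\<in>C. f j *\<^sub>R y j)"
  shows "(\<Sum>j\<in>C. f j * (norm (m - y j))\<^sup>2) \<le> (\<Sum>j\<in>C. f j * (norm (x - y j))\<^sup>2)"
proof -
  have "0 \<le> sum f C * (norm (x - m))\<^sup>2"
    using assms(1) by simp
  then show ?thesis
    using weighted_sum_norm_diff_squared[of f C m y x] assms by linarith
qed

definition onehot_columns :: "real^'n^'m \<Rightarrow> bool" where
  "onehot_columns A \<longleftrightarrow> (\<forall>i j. A $ i $ j = 0 \<or> A $ i $ j = 1) \<and> (\<forall>j. \<exists>!i. A $ i $ j = 1)"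

definition assignment :: "real^'n^'m \<Rightarrow> 'n \<Rightarrow> 'm" where
  "assignment A j = (THE i. A $ i $ j = 1)"

lemma onehot_columns_eq_assignment:
  assumes "onehot_columns A"
  shows "A $ i $ j = (if i = assignment A j then 1 else 0)"
proof -
  have unique: "\<exists>!i. A $ i $ j = 1"
    using assms by (simp add: onehot_columns_def)
  show ?thesis
  proof (cases "i = assignment A j")
    case True
    then show ?thesis
      using theI'[OF unique] by (simp add: assignment_def)
  next
    case False
    then have "A $ i $ j \<noteq> 1"
      using the1_equality[OF unique] by (auto simp: assignment_def)
    then show ?thesis
      using assms False by (auto simp: onehot_columns_def)
  qed
qed

lemma cluster_eq_assignment_fibre:
  assumes "onehot_columns A"
  shows "cluster A i = {j. assignment A j = i}"
  using onehot_columns_eq_assignment[OF assms] by (auto simp: cluster_def)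

lemma merge_residual_axis:
  fixes M :: "real^'m^'n" and A :: "real^'n^'m"
  assumes "onehot_columns A"
  shows "(M ** A - mat 1) *v axis j 1 = column (assignment A j) M - axis j 1"
proof -
  have "(M ** A) $ l $ j = M $ l $ assignment A j" for l
    by (simp add: matrix_matrix_mult_def onehot_columns_eq_assignment[OF assms]
        if_distrib cong: if_cong)
  then show ?thesis
    unfolding matrix_vector_mult_basis by (simp add: vec_eq_iff column_def mat_def axis_def)
qed

lemma Phi_eq_sum_clusters:
  fixes M :: "real^'m^'n" and A :: "real^'n^'m"
  assumes "onehot_columns A"
  shows "Phi Y0 f A M
       = (\<Sum>i\<in>UNIV. \<Sum>j\<in>cluster A i. f j * (norm (Y0 *v column i M - Y0 *v axis j 1))\<^sup>2)"
proof -
  let ?g = "\<lambda>i j. f j * (norm (Y0 *v column i M - Y0 *v axis j 1))\<^sup>2"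
  have "Phi Y0 f A M = (\<Sum>j\<in>UNIV. ?g (assignment A j) j)"
    unfolding Phi_def merge_residual_axis[OF assms] by (simp add: matrix_vector_mult_diff_distrib)
  also have "\<dots> = (\<Sum>i\<in>UNIV. \<Sum>j\<in>{j\<in>UNIV. assignment A j = i}. ?g (assignment A j) j)"
    by (rule sum.group[symmetric]) auto
  also have "\<dots> = (\<Sum>i\<in>UNIV. \<Sum>j\<in>cluster A i. ?g i j)"
    unfolding cluster_eq_assignment_fibre[OF assms] by (intro sum.cong refl) auto
  finally show ?thesis .
qed

lemma image_column_Bstar:
  "Y0 *v column i (Bstar f A)
     = (1 / sum f (cluster A i)) *\<^sub>R (\<Sum>j\<in>cluster A i. f j *\<^sub>R (Y0 *v axis j 1))"
proof -
  have "(Y0 *v column i (Bstar f A)) $ k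
      = (\<Sum>l\<in>cluster A i. Y0 $ k $ l * (f l / sum f (cluster A i)))" for k
    by (simp add: Bstar_def column_def matrix_vector_mult_def if_distrib sum.If_cases
        cong: if_cong)
  then show ?thesis
    by (simp add: vec_eq_iff sum_component matrix_vector_mult_basis column_def
        sum_divide_distrib algebra_simps)
qed

lemma admissible_Bstar: "admissible A (Bstar f A)"
  unfolding admissible_def Bstar_def by simp

theorem theorem1:
  fixes Y0 :: "real^'n^'k" and A :: "real^'n^'m" and f :: "'n \<Rightarrow> real"
    and B :: "real^'m^'n"
  assumes f_nonneg: "\<And>j. f j \<ge> 0"
    and A_01: "\<And>i j. A $ i $ j = 0 \<or> A $ i $ j = 1"
    and A_col: "\<And>j. \<exists>!i. A $ i $ j = 1"
    and S_pos: "\<And>i. (\<Sum>k\<in>cluster A i. f k) > 0"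
    and B_adm: "admissible A B"
  shows "admissible A (Bstar f A) \<and> Phi Y0 f A (Bstar f A) \<le> Phi Y0 f A B"
proof -
  have onehot: "onehot_columns A"
    using A_01 A_col by (simp add: onehot_columns_def)
  have "Phi Y0 f A (Bstar f A) \<le> Phi Y0 f A B"
    unfolding Phi_eq_sum_clusters[OF onehot]
    by (intro sum_mono weighted_mean_minimizes_weighted_sum_norm_diff_squared
        S_pos image_column_Bstar)
  then show ?thesis
    using admissible_Bstar by blast
qed

end
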